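(* Let $k\ge4$ and $d\ge1$. Let $x$ be a monomial of degree $(k-2)(2^d-1)$ in $P_k$. If $\omega_1(x)<k$ and there is $r>d$ with $\omega_r(x)>0$, then $x\in P_k^-((k-2)|^d)+\mathcal A(d-1)^+P_k$.
   Context: $P_k=\mathbb F_2[x_1,\dots,x_k]$, $\deg x_i=1$, a module over the mod-2 Steenrod algebra $\mathcal A$. $\mathcal A(d-1)$ is the sub-Hopf algebra generated by $Sq^i$, $0\le i<2^d$, and $\mathcal A(d-1)^+$ its augmentation ideal. For $x=x_1^{a_1}\cdots x_k^{a_k}$, $\omega_i(x)=\sum_j\alpha_{i-1}(a_j)$, with $\alpha_r(a)$ the $r$-th binary digit; weight vectors are ordered left-lexicographically. $(k-2)|^d$ is the weight vector with first $d$ entries $k-2$ and the rest $0$; $P_k^-((k-2)|^d)$ is spanned by monomials $y$ of degree $(k-2)(2^d-1)$ with $\omega(y)<(k-2)|^d$. *)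

theory Defs
  imports Main
begin

text \<open>Monomials of P_k = F_2[x_1,...,x_k] are exponent lists of length k;
 an element of P_k is a finite set of monomials (coefficients in F_2),
 addition is symmetric difference.\<close>

type_synonym monom = "nat list"
type_synonym poly = "nat list set"

definition padd :: "poly \<Rightarrow> poly \<Rightarrow> poly" where
  "padd p q = (p - q) \<union> (q - p)"

definition is_poly :: "nat \<Rightarrow> poly \<Rightarrow> bool" where
  "is_poly k p \<longleftrightarrow> finite p \<and> (\<forall>a\<in>p. length a = k)"

definition deg :: "monom \<Rightarrow> nat" where
  "deg a = sum_list a"

text \<open>Cartan formula: Sq^i(x^a) = sum over t with |t| = i of
 prod_j binom(a_j,t_j) x^(a+t); the monomials for distinct t are distinct.\<close>
definition Sq_mon :: "nat \<Rightarrow> monom \<Rightarrow> poly" where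
  "Sq_mon i a = {map2 (+) a t | t. length t = length a \<and> sum_list t = i \<and>
      (\<forall>j<length a. odd ((a ! j) choose (t ! j)))}"

definition Sq :: "nat \<Rightarrow> poly \<Rightarrow> poly" where
  "Sq i p = {b. odd (card {a\<in>p. b \<in> Sq_mon i a})}"

text \<open>A(d-1)^+ P_k: the F_2-span of all Sq^i f, 0 < i < 2^d, f \<in> P_k.
 (Every element of the augmentation ideal of A(d-1) is a sum of words
 Sq^{i_1}...Sq^{i_t}, t \<ge> 1, in the generators, so this is exactly
 A(d-1)^+ P_k.)\<close>
inductive_set hit :: "nat \<Rightarrow> nat \<Rightarrow> poly set" for k d where
  hit_zero: "{} \<in> hit k d"
| hit_step: "\<lbrakk>is_poly k f; 0 < i; i < 2 ^ d; g \<in> hit k d\<rbrakk>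
      \<Longrightarrow> padd (Sq i f) g \<in> hit k d"

definition omega :: "nat \<Rightarrow> monom \<Rightarrow> nat" where
  "omega i a = sum_list (map (\<lambda>aj. (aj div 2 ^ (i - 1)) mod 2) a)"

definition wlex_less :: "(nat \<Rightarrow> nat) \<Rightarrow> (nat \<Rightarrow> nat) \<Rightarrow> bool" where
  "wlex_less u v \<longleftrightarrow> (\<exists>m\<ge>1. (\<forall>i. 1 \<le> i \<and> i < m \<longrightarrow> u i = v i) \<and> u m < v m)"

definition wvec :: "nat \<Rightarrow> nat \<Rightarrow> nat \<Rightarrow> nat" where
  "wvec k d i = (if 1 \<le> i \<and> i \<le> d then k - 2 else 0)"

definition minus_mons :: "nat \<Rightarrow> nat \<Rightarrow> monom set" where
  "minus_mons k d = {y. length y = k \<and> deg y = (k - 2) * (2 ^ d - 1) \<and>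
      wlex_less (\<lambda>i. omega i y) (wvec k d)}"

definition Pminus :: "nat \<Rightarrow> nat \<Rightarrow> poly set" where
  "Pminus k d = {p. finite p \<and> p \<subseteq> minus_mons k d}"

end

theory Submission
  imports Defs
begin

text \<open>Induct on the length \<open>n\<close> of the initial run \<open>\<omega>\<^sub>1 = \<dots> = \<omega>\<^sub>n = k - 2\<close> of the
  weight vector.  Writing the degree \<open>(k-2)(2^d-1)\<close> in binary shows that an exponent
  \<open>\<ge> 2^d\<close> forces \<open>n < d\<close> and that \<open>\<omega>\<^sub>n\<^sub>+\<^sub>1 \<equiv> k (mod 2)\<close>.  If \<open>\<omega>\<^sub>n\<^sub>+\<^sub>1 < k - 2\<close> the monomial
  lies in \<open>P\<^sub>k\<^sup>-\<close>, if \<open>\<omega>\<^sub>n\<^sub>+\<^sub>1 = k - 2\<close> the run is longer, and otherwise \<open>\<omega>\<^sub>n\<^sub>+\<^sub>1 = k\<close>, which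
  needs \<open>n \<ge> 1\<close> because \<open>\<omega>\<^sub>1 < k\<close>.  Then every exponent has binary digit \<open>1\<close> in position \<open>n\<close>
  and some exponent \<open>a\<^sub>j\<close> has digit \<open>0\<close> in position \<open>n - 1\<close>.  Lowering \<open>a\<^sub>j\<close> by
  \<open>h = 2^(n-1)\<close> gives a monomial \<open>y\<close> such that \<open>x\<close> is a term of \<open>Sq\<^sup>h y\<close>.  By the Cartan
  formula every other term of \<open>Sq\<^sup>h y\<close> either distributes \<open>h\<close> with 2-adic valuation \<open>p < n - 1\<close>,
  and then its weight vector drops below \<open>(k-2)|\<^sup>d\<close> at \<open>\<omega>\<^sub>p\<^sub>+\<^sub>1\<close>, or adds \<open>h\<close> to a single
  other exponent whose digits in positions \<open>n - 1, n\<close> are \<open>1, 1\<close>, and then the carry produces a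
  monomial with a longer initial run.\<close>

section \<open>Binomial coefficients modulo 2\<close>

lemma odd_choose_double_double_iff: "odd ((2*a) choose (2*b)) \<longleftrightarrow> odd (a choose b)"
proof (induction a arbitrary: b)
  case 0
  then show ?case by (cases b) auto
next
  case (Suc a)
  show ?case
  proof (cases b)
    case (Suc c)
    have "(2 * Suc a) choose (2*b)
        = ((2*a) choose (2*c)) + 2 * ((2*a) choose Suc (2*c)) + ((2*a) choose (2*(c+1)))"
      using Suc by (simp add: numeral_2_eq_2)
    then have "odd ((2 * Suc a) choose (2*b))
        \<longleftrightarrow> odd (((2*a) choose (2*c)) + ((2*a) choose (2*(c+1))))"
      by presburger
    also have "\<dots> \<longleftrightarrow> odd ((a choose c) + (a choose (c+1)))"
      using Suc.IH[of c] Suc.IH[of "c+1"] by auto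
    finally show ?thesis
      using Suc by simp
  qed simp
qed

lemma even_choose_double_odd: "even ((2*a) choose (2*b+1))"
proof (cases a)
  case (Suc a')
  have "(2*a) * ((2*a'+1) choose (2*b)) = ((2*a) choose (2*b+1)) * (2*b+1)"
    using Suc_times_binomial_eq[of "2*a'+1" "2*b"] Suc by simp
  then have "even (((2*a) choose (2*b+1)) * (2*b+1))"
    by (metis dvd_mult2 dvd_triv_left)
  then show ?thesis
    by simp
qed simp

lemma odd_choose_odd_double_iff: "odd ((2*a+1) choose (2*b)) \<longleftrightarrow> odd (a choose b)"
proof (cases b)
  case (Suc c)
  have "(2*a+1) choose (2*b) = ((2*a) choose (2*c+1)) + ((2*a) choose (2*b))"
    using Suc by simp
  then show ?thesis
    using even_choose_double_odd[of a c] odd_choose_double_double_iff[of a b] by presburger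
qed simp

lemma odd_choose_even_iff:
  assumes "even t"
  shows "odd (n choose t) \<longleftrightarrow> odd ((n div 2) choose (t div 2))"
proof -
  obtain b where t: "t = 2*b" using assms ..
  consider a where "n = 2*a" | a where "n = 2*a+1" by (metis evenE oddE)
  then show ?thesis
  proof cases
    case (1 a)
    then show ?thesis using odd_choose_double_double_iff[of a b] t by simp
  next
    case (2 a)
    then show ?thesis using odd_choose_odd_double_iff[of a b] t by simp
  qed
qed

lemma odd_choose_pow2_mult_iff: "odd (n choose (2^q * u)) \<longleftrightarrow> odd ((n div 2^q) choose u)"
proof (induction q arbitrary: n)
  case (Suc q)
  have "odd (n choose (2^Suc q * u)) \<longleftrightarrow> odd ((n div 2) choose (2^q * u))"
    using odd_choose_even_iff[of "2^Suc q * u" n] by simp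
  then show ?case
    using Suc.IH[of "n div 2"] by (simp add: div_mult2_eq)
qed simp

lemma odd_choose_pow2_iff: "odd (n choose 2^q) \<longleftrightarrow> odd (n div 2^q)"
  using odd_choose_pow2_mult_iff[of n q 1] by simp

lemma odd_div_pow2_if_odd_choose:
  assumes "odd u" "odd (n choose (2^q * u))"
  shows "odd (n div 2^q)"
proof (rule ccontr)
  assume "\<not> odd (n div 2^q)"
  then obtain m where m: "n div 2^q = 2*m" by blast
  obtain v where v: "u = 2*v+1" using assms(1) by (blast elim: oddE)
  have "odd ((n div 2^q) choose u)"
    using assms(2) odd_choose_pow2_mult_iff by blast
  then have "odd ((2*m) choose (2*v+1))"
    by (metis m v)
  with even_choose_double_odd show False
    by blast
qed

section \<open>Binary digits and the weight vector\<close>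

definition digit :: "nat \<Rightarrow> nat \<Rightarrow> nat" where
  "digit q u = u div 2 ^ q mod 2"

lemma digit_le_1: "digit q u \<le> 1"
  unfolding digit_def by simp

lemma digit_Suc: "digit (Suc q) u = u div 2 ^ q div 2 mod 2"
  unfolding digit_def by (simp only: power_Suc2 div_mult2_eq)

lemma digit_add_pow2_mult:
  assumes "q < m"
  shows "digit q (u + 2 ^ m * c) = digit q u"
proof -
  obtain r where "m = Suc q + r"
    using assms by (metis less_iff_Suc_add add_Suc)
  then have eq: "2 ^ m * c = 2 ^ q * (2 * (2 ^ r * c))"
    by (simp add: power_add)
  have "(u + 2 ^ m * c) div 2 ^ q = u div 2 ^ q + 2 * (2 ^ r * c)"
    unfolding eq by simp
  then show ?thesis
    unfolding digit_def by simp
qed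

lemma digits_add_pow2_carry:
  assumes "digit q u = 1" "digit (Suc q) u = 1"
  shows "digit q (u + 2 ^ q) = 0 \<and> digit (Suc q) (u + 2 ^ q) = 0"
proof -
  obtain X where X: "u div 2 ^ q = X"
    by simp
  have Y: "(u + 2 ^ q) div 2 ^ q = X + 1"
    using div_add_self2[of "2 ^ q" u] X by simp
  show ?thesis
    using assms unfolding digit_Suc unfolding digit_def X Y by presburger
qed

lemma digits_sub_pow2_borrow:
  assumes "digit q u = 0" "digit (Suc q) u = 1"
  shows "2 ^ q \<le> u" and "digit q (u - 2 ^ q) = 1 \<and> digit (Suc q) (u - 2 ^ q) = 0"
proof -
  have "0 < u div 2 ^ q"
    using assms(2) unfolding digit_Suc by (cases "u div 2 ^ q") auto
  then show le: "2 ^ q \<le> u"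
    by (simp add: div_greater_zero_iff)
  obtain X where X: "(u - 2 ^ q) div 2 ^ q = X"
    by simp
  have U: "u div 2 ^ q = X + 1"
    using le X by (metis le_add_diff_inverse2 div_add_self2 power_not_zero zero_neq_numeral)
  show "digit q (u - 2 ^ q) = 1 \<and> digit (Suc q) (u - 2 ^ q) = 0"
    using assms unfolding digit_Suc unfolding digit_def X U by presburger
qed

lemma mod_pow2_eq_sum_digits: "u mod 2 ^ n = (\<Sum>q<n. 2 ^ q * digit q u)"
proof (induction n)
  case (Suc n)
  have "u mod 2 ^ Suc n = 2 ^ n * digit n u + u mod 2 ^ n"
    unfolding digit_def by (metis mod_mult2_eq power_Suc2)
  then show ?case
    using Suc by simp
qed simp

lemma ge_pow2_after_sub_below_digit:
  assumes "2 ^ d \<le> u" "digit n u = 1" "n < d" "h \<le> 2 ^ n"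
  shows "2 ^ d \<le> u - h"
proof -
  obtain r where d: "d = Suc n + r"
    using assms(3) by (metis less_iff_Suc_add add_Suc)
  define M :: nat where "M = 2 ^ Suc n"
  have "2 ^ n \<le> u mod M"
    using mod_pow2_eq_sum_digits[of u "Suc n"] assms(2) unfolding M_def by simp
  moreover have "2 ^ d = M * 2 ^ r"
    unfolding M_def d power_add ..
  moreover have "2 ^ r \<le> u div M"
    using div_le_mono[OF assms(1), of M] \<open>2 ^ d = M * 2 ^ r\<close> unfolding M_def by simp
  then have "M * 2 ^ r \<le> M * (u div M)"
    by simp
  moreover have "M * (u div M) + u mod M = u"
    by simp
  ultimately show ?thesis
    using assms(4) by linarith
qed

lemma omega_Suc_eq_sum_digit: "omega (Suc q) a = (\<Sum>i<length a. digit q (a ! i))"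
  unfolding omega_def digit_def by (simp add: sum_list_sum_nth atLeast0LessThan)

lemma deg_eq_sum_nth: "deg a = (\<Sum>i<length a. a ! i)"
  unfolding deg_def by (simp add: sum_list_sum_nth atLeast0LessThan)

lemma omega_Suc_le_length: "omega (Suc q) a \<le> length a"
proof -
  have "(\<Sum>i<length a. digit q (a ! i)) \<le> (\<Sum>i<length a. 1)"
    by (rule sum_mono) (rule digit_le_1)
  then show ?thesis
    by (simp add: omega_Suc_eq_sum_digit)
qed

lemma omega_Suc_eq_length_iff:
  "omega (Suc q) a = length a \<longleftrightarrow> (\<forall>i<length a. digit q (a ! i) = 1)"
proof
  assume sum: "omega (Suc q) a = length a"
  show "\<forall>i<length a. digit q (a ! i) = 1"
  proof (rule ccontr)
    assume "\<not> (\<forall>i<length a. digit q (a ! i) = 1)"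
    then obtain i where "i < length a" "digit q (a ! i) < 1"
      using digit_le_1 le_neq_implies_less by blast
    then have "(\<Sum>i<length a. digit q (a ! i)) < (\<Sum>i<length a. 1)"
      by (intro sum_strict_mono_ex1) (auto simp: digit_le_1[simplified])
    then show False
      using sum by (simp add: omega_Suc_eq_sum_digit)
  qed
qed (simp add: omega_Suc_eq_sum_digit)

lemma omega_Suc_eq_if_digits_eq:
  assumes "length b = length a" "\<And>i. i < length a \<Longrightarrow> digit q (b ! i) = digit q (a ! i)"
  shows "omega (Suc q) b = omega (Suc q) a"
  using assms by (simp add: omega_Suc_eq_sum_digit)

lemma omega_Suc_update_add_pow2_mult:
  assumes "q < n"
  shows "omega (Suc q) (y[i := y ! i + 2 ^ n * c]) = omega (Suc q) y"
proof (cases "i < length y")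
  case True
  then show ?thesis
    using digit_add_pow2_mult[OF assms] by (intro omega_Suc_eq_if_digits_eq) (auto simp: nth_list_update)
qed (simp add: list_update_beyond)

lemma omega_Suc_update_sub_pow2:
  assumes "2 ^ n \<le> y ! i" "q < n"
  shows "omega (Suc q) (y[i := y ! i - 2 ^ n]) = omega (Suc q) y"
proof (cases "i < length y")
  case True
  define z where "z = y[i := y ! i - 2 ^ n]"
  have "y = z[i := z ! i + 2 ^ n * 1]"
    using True assms(1) unfolding z_def by simp
  then have "omega (Suc q) y = omega (Suc q) z"
    using omega_Suc_update_add_pow2_mult[OF assms(2), of z i 1] by simp
  then show ?thesis
    unfolding z_def by simp
qed (simp add: list_update_beyond)

lemma deg_eq_omega_expansion:
  "deg a = (\<Sum>q<m. 2 ^ q * omega (Suc q) a) + 2 ^ m * (\<Sum>i<length a. a ! i div 2 ^ m)"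
proof -
  have "deg a = (\<Sum>i<length a. a ! i mod 2 ^ m + 2 ^ m * (a ! i div 2 ^ m))"
    unfolding deg_eq_sum_nth by simp
  also have "\<dots> = (\<Sum>i<length a. \<Sum>q<m. 2 ^ q * digit q (a ! i))
      + 2 ^ m * (\<Sum>i<length a. a ! i div 2 ^ m)"
    by (simp add: sum.distrib sum_distrib_left mod_pow2_eq_sum_digits)
  also have "(\<Sum>i<length a. \<Sum>q<m. 2 ^ q * digit q (a ! i)) = (\<Sum>q<m. 2 ^ q * omega (Suc q) a)"
    by (subst sum.swap) (simp add: omega_Suc_eq_sum_digit sum_distrib_left)
  finally show ?thesis .
qed

lemma sum_pow2_mult: "(\<Sum>q<n. 2 ^ q * (c::nat)) = c * (2 ^ n - 1)"
proof (induction n)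
  case (Suc n)
  have "(1::nat) \<le> 2 ^ n"
    by simp
  then show ?case
    using Suc by (simp add: algebra_simps)
qed simp

lemma entries_less_pow2_if_full_prefix:
  assumes "deg a = (k - 2) * (2 ^ d - 1)" "\<forall>q<d. omega (Suc q) a = k - 2" "i < length a"
  shows "a ! i < 2 ^ d"
proof -
  have "(\<Sum>q<d. 2 ^ q * omega (Suc q) a) = (k - 2) * (2 ^ d - 1)"
    using assms(2) by (simp add: sum_pow2_mult)
  then have "(\<Sum>i<length a. a ! i div 2 ^ d) = 0"
    using deg_eq_omega_expansion[of a d] assms(1) by simp
  then show ?thesis
    using assms(3) by (simp add: div_eq_0_iff)
qed

lemma mult_pred_mult:
  assumes "1 \<le> P" "1 \<le> Q"
  shows "(K::nat) * (P * Q - 1) = K * (P - 1) + P * (K * (Q - 1))"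
proof -
  obtain p q where "P = Suc p" "Q = Suc q"
    using assms by (metis Suc_le_D One_nat_def)
  then show ?thesis
    by (simp add: algebra_simps)
qed

lemma omega_parity:
  assumes "deg a = (k - 2) * (2 ^ d - 1)" "n < d" "\<forall>q<n. omega (Suc q) a = k - 2" "2 \<le> k"
  shows "even (omega (Suc n) a + k)"
proof -
  define K where "K = k - 2"
  define c where "c = omega (Suc n) a"
  define S where "S = (\<Sum>i<length a. a ! i div 2 ^ Suc n)"
  obtain r where d: "d = n + Suc r"
    using less_imp_Suc_add[OF assms(2)] by auto
  obtain B where B: "K * (2 ^ n - 1) = B"
    by simp
  have "(\<Sum>q<Suc n. 2 ^ q * omega (Suc q) a) = B + 2 ^ n * c"
    using assms(3) B unfolding K_def c_def by (simp add: sum_pow2_mult)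
  then have "deg a = B + 2 ^ n * c + 2 ^ Suc n * S"
    using deg_eq_omega_expansion[of a "Suc n"] unfolding S_def by simp
  then have "B + 2 ^ n * (c + 2 * S) = deg a"
    by (simp add: algebra_simps)
  also have "deg a = B + 2 ^ n * (K * (2 ^ Suc r - 1))"
    using mult_pred_mult[of "2 ^ n" "2 ^ Suc r" K] B
    unfolding assms(1) K_def[symmetric] d power_add by simp
  finally have "c + 2 * S = K * (2 ^ Suc r - 1)"
    by simp
  moreover have "odd ((2::nat) ^ Suc r - 1)"
    by simp
  ultimately have "even c \<longleftrightarrow> even K"
    by (metis even_add even_mult_iff dvd_triv_left)
  moreover have "k = K + 2"
    unfolding K_def using assms(4) by simp
  ultimately show ?thesis
    unfolding c_def by simp
qed

lemma minus_monsI: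
  assumes "length a = k" "deg a = (k - 2) * (2 ^ d - 1)" "m < d"
    "\<forall>q<m. omega (Suc q) a = k - 2" "omega (Suc m) a < k - 2"
  shows "a \<in> minus_mons k d"
proof -
  have "wlex_less (\<lambda>i. omega i a) (wvec k d)"
    unfolding wlex_less_def
  proof (intro exI[of _ "Suc m"] conjI allI impI)
    fix i assume "1 \<le> i \<and> i < Suc m"
    then obtain q where "i = Suc q" "q < m"
      by (cases i) auto
    then show "omega i a = wvec k d i"
      using assms(3,4) unfolding wvec_def by simp
  qed (use assms(3,5) in \<open>simp_all add: wvec_def\<close>)
  then show ?thesis
    unfolding minus_mons_def using assms(1,2) by simp
qed

definition negligible :: "nat \<Rightarrow> nat \<Rightarrow> poly set" where
  "negligible k d = {padd p q | p q. p \<in> Pminus k d \<and> q \<in> hit k d}"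

lemma padd_assoc: "padd (padd p q) r = padd p (padd q r)"
  unfolding padd_def by blast

lemma padd_empty [simp]: "padd p {} = p" "padd {} p = p"
  unfolding padd_def by auto

lemma hit_padd: "q \<in> hit k d \<Longrightarrow> q' \<in> hit k d \<Longrightarrow> padd q q' \<in> hit k d"
  by (induction q rule: hit.induct) (simp_all add: padd_assoc hit.hit_step)

lemma Pminus_padd: "p \<in> Pminus k d \<Longrightarrow> p' \<in> Pminus k d \<Longrightarrow> padd p p' \<in> Pminus k d"
  unfolding Pminus_def padd_def by auto

lemma negligible_if_hit: "q \<in> hit k d \<Longrightarrow> q \<in> negligible k d"
  unfolding negligible_def Pminus_def by force

lemma negligible_singleton_if_minus_mons: "a \<in> minus_mons k d \<Longrightarrow> {a} \<in> negligible k d"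
  unfolding negligible_def Pminus_def using hit_zero by force

lemma negligible_padd:
  assumes "u \<in> negligible k d" "v \<in> negligible k d"
  shows "padd u v \<in> negligible k d"
proof -
  obtain p q p' q' where "p \<in> Pminus k d" "q \<in> hit k d" "u = padd p q"
    "p' \<in> Pminus k d" "q' \<in> hit k d" "v = padd p' q'"
    using assms unfolding negligible_def by blast
  moreover have "padd (padd p q) (padd p' q') = padd (padd p p') (padd q q')"
    unfolding padd_def by blast
  ultimately show ?thesis
    unfolding negligible_def using Pminus_padd hit_padd by blast
qed

lemma negligible_if_singletons:
  "finite R \<Longrightarrow> (\<And>b. b \<in> R \<Longrightarrow> {b} \<in> negligible k d) \<Longrightarrow> R \<in> negligible k d"
proof (induction R rule: finite_induct)
  case empty
  show ?case
    using negligible_if_hit[OF hit_zero] .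
next
  case (insert b R)
  have "insert b R = padd {b} R"
    using insert.hyps(2) unfolding padd_def by blast
  moreover have "{b} \<in> negligible k d" "R \<in> negligible k d"
    using insert by auto
  ultimately show ?case
    using negligible_padd by simp
qed

lemma Sq_singleton: "Sq i {a} = Sq_mon i a"
proof -
  have "{a' \<in> {a}. b \<in> Sq_mon i a'} = (if b \<in> Sq_mon i a then {a} else {})" for b
    by auto
  then show ?thesis
    unfolding Sq_def by auto
qed

lemma finite_Sq_mon: "finite (Sq_mon i a)"
proof -
  have "Sq_mon i a \<subseteq> map2 (+) a ` {t. set t \<subseteq> {..i} \<and> length t = length a}"
  proof
    fix b assume "b \<in> Sq_mon i a"
    then obtain t where t: "b = map2 (+) a t" "length t = length a" "sum_list t = i"
      unfolding Sq_mon_def by blast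
    then have "set t \<subseteq> {..i}"
      using member_le_sum_list by fastforce
    then show "b \<in> map2 (+) a ` {t. set t \<subseteq> {..i} \<and> length t = length a}"
      using t by blast
  qed
  moreover have "finite {t. set t \<subseteq> {..i} \<and> length t = length a}"
    by (rule finite_lists_length_eq) simp
  ultimately show ?thesis
    using finite_subset by blast
qed

lemma Sq_mon_hit: "length a = k \<Longrightarrow> 0 < i \<Longrightarrow> i < 2 ^ d \<Longrightarrow> Sq_mon i a \<in> hit k d"
  using hit_step[OF _ _ _ hit_zero, of k "{a}" i d] by (simp add: is_poly_def Sq_singleton)

section \<open>Terms of the Cartan formula\<close>

lemma sum_list_map2_plus:
  "length xs = length ys \<Longrightarrow> sum_list (map2 (+) xs ys) = sum_list xs + (sum_list ys :: nat)"
  by (induction xs ys rule: list_induct2) auto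

lemma deg_Sq_mon: "b \<in> Sq_mon i a \<Longrightarrow> deg b = deg a + i"
  unfolding Sq_mon_def deg_def by (auto simp: sum_list_map2_plus)

lemma map2_plus_single:
  fixes a :: "nat list"
  assumes "length t = length a" "i < length a" "\<forall>j<length a. t ! j = (if j = i then h else 0)"
  shows "map2 (+) a t = a[i := a ! i + h]"
proof (rule nth_equalityI)
  fix j assume "j < length (map2 (+) a t)"
  then show "map2 (+) a t ! j = a[i := a ! i + h] ! j"
    using assms by (cases "j = i") simp_all
qed (use assms in simp)

lemma update_add_mem_Sq_mon:
  assumes "i < length a" "odd (a ! i choose h)"
  shows "a[i := a ! i + h] \<in> Sq_mon h a"
proof -
  define t where "t = (replicate (length a) 0)[i := h]"
  have t: "length t = length a" "\<forall>j<length a. t ! j = (if j = i then h else 0)"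
    unfolding t_def by auto
  have "a[i := a ! i + h] = map2 (+) a t"
    using map2_plus_single[OF t(1) assms(1) t(2)] by simp
  moreover have "sum_list t = h"
    unfolding t_def using assms(1) by (simp add: sum_list_update)
  moreover have "\<forall>j<length a. odd (a ! j choose t ! j)"
    using t(2) assms(2) by simp
  ultimately show ?thesis
    unfolding Sq_mon_def using t(1) by blast
qed

text \<open>By Lucas' theorem the hypothesis forces digit \<open>p\<close> of \<open>u\<close> to be \<open>1\<close> when \<open>v\<close> is odd.\<close>

lemma digit_add_pow2_mult_le:
  assumes "odd (u choose (2 ^ p * v))"
  shows "digit p (u + 2 ^ p * v) \<le> digit p u"
    and "odd v \<Longrightarrow> digit p (u + 2 ^ p * v) < digit p u"
proof -
  obtain X where X: "u div 2 ^ p = X"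
    by simp
  have sum: "digit p (u + 2 ^ p * v) = (X + v) mod 2" "digit p u = X mod 2"
    unfolding digit_def X[symmetric] by (simp_all add: add.commute)
  have "odd v \<Longrightarrow> odd X"
    using odd_div_pow2_if_odd_choose assms X by blast
  then show "digit p (u + 2 ^ p * v) \<le> digit p u" "odd v \<Longrightarrow> digit p (u + 2 ^ p * v) < digit p u"
    unfolding sum by presburger+
qed

lemma omega_Sq_mon_term_drop:
  assumes "length t = length a" "\<forall>i<length a. odd (a ! i choose t ! i)"
    "\<forall>i<length a. 2 ^ p dvd t ! i" "i0 < length a" "\<not> 2 ^ Suc p dvd t ! i0"
  shows "\<forall>q<p. omega (Suc q) (map2 (+) a t) = omega (Suc q) a"
    and "omega (Suc p) (map2 (+) a t) < omega (Suc p) a"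
proof -
  define v where "v i = t ! i div 2 ^ p" for i
  have v: "t ! i = 2 ^ p * v i" if "i < length a" for i
    using assms(3) that unfolding v_def by simp
  have b: "\<And>i. i < length a \<Longrightarrow> map2 (+) a t ! i = a ! i + 2 ^ p * v i"
    using assms(1) v by simp
  show "\<forall>q<p. omega (Suc q) (map2 (+) a t) = omega (Suc q) a"
    using assms(1) by (auto intro!: omega_Suc_eq_if_digits_eq simp: v digit_add_pow2_mult)
  have odd_choose: "odd (a ! i choose (2 ^ p * v i))" if "i < length a" for i
    using assms(2) v that by simp
  have "odd (v i0)"
    using assms(5) v[OF assms(4)] by auto
  then have "(\<Sum>i<length a. digit p (map2 (+) a t ! i)) < (\<Sum>i<length a. digit p (a ! i))"
    using assms(4) digit_add_pow2_mult_le[OF odd_choose]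
    by (intro sum_strict_mono_ex1) (auto simp: b)
  then show "omega (Suc p) (map2 (+) a t) < omega (Suc p) a"
    using assms(1) by (simp add: omega_Suc_eq_sum_digit)
qed

lemma ex_pow2_valuation:
  assumes "i \<in> I" "f i \<noteq> (0::nat)"
  shows "\<exists>p. (\<forall>j\<in>I. 2 ^ p dvd f j) \<and> (\<exists>j\<in>I. \<not> 2 ^ Suc p dvd f j)"
proof -
  define P where "P q \<longleftrightarrow> (\<exists>j\<in>I. \<not> 2 ^ Suc q dvd f j)" for q
  have "f i < 2 ^ f i"
    by (rule less_exp)
  also have "\<dots> < 2 ^ Suc (f i)"
    by simp
  finally have "f i < 2 ^ Suc (f i)" .
  then have "P (f i)"
    unfolding P_def using assms by (meson nat_dvd_not_less not_gr_zero)
  then have "P (LEAST q. P q)"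
    by (rule LeastI)
  moreover have "\<forall>j\<in>I. 2 ^ (LEAST q. P q) dvd f j"
  proof (cases "LEAST q. P q")
    case (Suc q)
    then have "\<not> P q"
      by (metis lessI not_less_Least)
    then have "\<forall>j\<in>I. 2 ^ Suc q dvd f j"
      unfolding P_def by simp
    then show ?thesis
      using Suc by simp
  qed simp
  ultimately show ?thesis
    unfolding P_def by blast
qed

lemma single_support_if_sum_of_multiples:
  assumes "0 < h" "\<forall>j<length t. h dvd t ! j" "sum_list t = (h::nat)"
  obtains i where "i < length t" "t ! i = h" "\<forall>j<length t. j \<noteq> i \<longrightarrow> t ! j = 0"
proof -
  obtain i where i: "i < length t" "t ! i \<noteq> 0"
    using assms(1,3) by (metis in_set_conv_nth sum_list_eq_0_iff less_not_refl2)
  have ti: "t ! i = h"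
    using i assms(2,3) elem_le_sum_list[OF i(1)] by (meson dvd_imp_le le_antisym not_gr_zero)
  have "t ! j = 0" if "j < length t" "j \<noteq> i" for j
  proof -
    have "(\<Sum>l\<in>{i, j}. t ! l) \<le> (\<Sum>l<length t. t ! l)"
      using i(1) that(1) by (intro sum_mono2) auto
    then show ?thesis
      using ti that(2) assms(3) by (simp add: sum_list_sum_nth atLeast0LessThan)
  qed
  then show ?thesis
    using that i(1) ti by blast
qed

lemma sum_agree_off_pair:
  assumes "finite I" "i \<in> I" "j \<in> I" "i \<noteq> j" "\<forall>l\<in>I - {i, j}. f l = g l"
  shows "sum f I + (g i + g j) = sum g I + (f i + (f j :: nat))"
proof -
  have "sum f I = sum f (I - {i, j}) + (f i + f j)" "sum g I = sum g (I - {i, j}) + (g i + g j)"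
    using assms(1-4) by (simp_all add: sum.subset_diff[of "{i, j}" I])
  moreover have "sum f (I - {i, j}) = sum g (I - {i, j})"
    using assms(5) by simp
  ultimately show ?thesis
    by simp
qed

section \<open>The carry step\<close>

text \<open>An exponent \<open>\<ge> 2^d\<close> is the same as \<open>\<omega>\<^sub>r > 0\<close> for some \<open>r > d\<close>.\<close>

definition heavy :: "nat \<Rightarrow> nat \<Rightarrow> monom \<Rightarrow> bool" where
  "heavy k d y \<longleftrightarrow> length y = k \<and> deg y = (k - 2) * (2 ^ d - 1) \<and> (\<exists>i<k. 2 ^ d \<le> y ! i)"

lemma carry_extends_full_prefix:
  assumes "length y = k" "j < k" "i < k" "j \<noteq> i"
    and "digit n (y ! j) = 0" "digit n (y ! i) = 1" "\<forall>l<k. digit (Suc n) (y ! l) = 1"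
    and "\<forall>q<Suc n. omega (Suc q) y = k - 2"
  shows "\<forall>q<Suc (Suc n). omega (Suc q) (y[j := y ! j - 2 ^ n, i := y ! i + 2 ^ n]) = k - 2"
proof -
  define b where "b = y[j := y ! j - 2 ^ n, i := y ! i + 2 ^ n]"
  have lb: "length b = k"
    unfolding b_def using assms(1) by simp
  have bj: "b ! j = y ! j - 2 ^ n" and bi: "b ! i = y ! i + 2 ^ n"
    and bl: "\<And>l. l \<noteq> j \<Longrightarrow> l \<noteq> i \<Longrightarrow> b ! l = y ! l"
    unfolding b_def using assms(1-4) by simp_all
  have le: "2 ^ n \<le> y ! j" and borrow: "digit n (b ! j) = 1 \<and> digit (Suc n) (b ! j) = 0"
    using digits_sub_pow2_borrow[OF assms(5)] assms(2,7) bj by simp_all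
  have carry: "digit n (b ! i) = 0 \<and> digit (Suc n) (b ! i) = 0"
    using digits_add_pow2_carry[OF assms(6)] assms(3,7) bi by simp
  have pair: "omega (Suc q) b + (digit q (y ! j) + digit q (y ! i))
      = omega (Suc q) y + (digit q (b ! j) + digit q (b ! i))" for q
    unfolding omega_Suc_eq_sum_digit lb assms(1)
    by (rule sum_agree_off_pair) (use assms(2-4) bl in auto)
  have "omega (Suc q) b = k - 2" if q: "q < Suc (Suc n)" for q
  proof -
    consider "q < n" | "q = n" | "q = Suc n"
      using q by linarith
    then show ?thesis
    proof cases
      case 1
      have "omega (Suc q) b = omega (Suc q) (y[j := y ! j - 2 ^ n])"
        unfolding b_def using omega_Suc_update_add_pow2_mult[OF 1, of "y[j := y ! j - 2 ^ n]" i 1] assms(4)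
        by simp
      also have "\<dots> = omega (Suc q) y"
        using omega_Suc_update_sub_pow2[OF le 1] .
      finally show ?thesis
        using 1 assms(8) by simp
    next
      case 2
      then show ?thesis
        using pair[of n] borrow carry assms(5,6,8) by simp
    next
      case 3
      have "omega (Suc (Suc n)) y = k"
        using assms(1,7) omega_Suc_eq_length_iff[of "Suc n" y] by simp
      then show ?thesis
        using 3 pair[of "Suc n"] borrow carry assms(2,3,7) by simp
    qed
  qed
  then show ?thesis
    unfolding b_def by blast
qed

lemma borrow_mem_Sq_mon:
  assumes "j < length y" "digit n (y ! j) = 0" "digit (Suc n) (y ! j) = 1"
  shows "y \<in> Sq_mon (2 ^ n) (y[j := y ! j - 2 ^ n])"
proof -
  define a where "a = y[j := y ! j - 2 ^ n]"
  have "2 ^ n \<le> y ! j" "digit n (a ! j) = 1"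
    using digits_sub_pow2_borrow[OF assms(2,3)] assms(1) unfolding a_def by simp_all
  then have odd: "odd (a ! j choose 2 ^ n)" and y: "a[j := a ! j + 2 ^ n] = y"
    unfolding odd_choose_pow2_iff digit_def a_def using assms(1) by auto
  have "j < length a"
    unfolding a_def using assms(1) by simp
  from update_add_mem_Sq_mon[OF this odd] have "y \<in> Sq_mon (2 ^ n) a"
    unfolding y .
  then show ?thesis
    unfolding a_def .
qed

lemma minus_mons_if_valuation_below:
  assumes "length a = k" "length t = k" "deg (map2 (+) a t) = (k - 2) * (2 ^ d - 1)" "n < d"
    "\<forall>q<n. omega (Suc q) a = k - 2" "\<forall>i<k. odd (a ! i choose t ! i)"
    "\<forall>i<k. 2 ^ p dvd t ! i" "i0 < k" "\<not> 2 ^ Suc p dvd t ! i0" "p < n"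
  shows "map2 (+) a t \<in> minus_mons k d"
proof (rule minus_monsI)
  note drop = omega_Sq_mon_term_drop[of t a p i0]
  show "\<forall>q<p. omega (Suc q) (map2 (+) a t) = k - 2"
    using drop(1) assms by simp
  show "omega (Suc p) (map2 (+) a t) < k - 2"
    using drop(2) assms by simp
qed (use assms in simp_all)

lemma concentrated_Sq_mon_term:
  assumes "y = a[j := a ! j + 2 ^ n]" "j < length a" "b = map2 (+) a t" "b \<noteq> y"
    "length t = length a" "sum_list t = 2 ^ n" "\<forall>i<length a. 2 ^ n dvd t ! i"
    "\<forall>i<length a. odd (a ! i choose t ! i)"
  obtains i where "i < length a" "i \<noteq> j" "b = y[j := y ! j - 2 ^ n, i := y ! i + 2 ^ n]"
    "digit n (y ! i) = 1"
proof -
  obtain i where i: "i < length a" "t ! i = 2 ^ n" "\<forall>l<length a. l \<noteq> i \<longrightarrow> t ! l = 0"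
    using single_support_if_sum_of_multiples[of "2 ^ n" t] assms(5-7) by auto
  have b: "b = a[i := a ! i + 2 ^ n]"
    using assms(3) map2_plus_single[OF assms(5) i(1)] i(2,3) by auto
  then have "i \<noteq> j"
    using assms(1,4) by blast
  have "odd (a ! i div 2 ^ n)"
    using assms(8) i(1,2) odd_choose_pow2_iff by metis
  then have "digit n (y ! i) = 1"
    using assms(1) \<open>i \<noteq> j\<close> by (simp add: digit_def odd_iff_mod_2_eq_one)
  moreover have "b = y[j := y ! j - 2 ^ n, i := y ! i + 2 ^ n]"
    using b assms(1,2) \<open>i \<noteq> j\<close> by (simp add: list_update_swap)
  ultimately show ?thesis
    using that i(1) \<open>i \<noteq> j\<close> by blast
qed

lemma heavy_Sq_mon_term:
  assumes "heavy k d y" "Suc n < d" "j < k" "digit n (y ! j) = 0" "digit (Suc n) (y ! j) = 1"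
    and "b \<in> Sq_mon (2 ^ n) (y[j := y ! j - 2 ^ n])"
  shows "heavy k d b"
proof -
  define a where "a = y[j := y ! j - 2 ^ n]"
  obtain t where t: "b = map2 (+) a t" "length t = length a"
    using assms(6) unfolding Sq_mon_def a_def by blast
  obtain e where e: "e < k" "2 ^ d \<le> y ! e" and ly: "length y = k"
    using assms(1) unfolding heavy_def by blast
  have "2 ^ d \<le> a ! e"
  proof (cases "e = j")
    case True
    have "2 ^ d \<le> y ! j - 2 ^ n"
      using ge_pow2_after_sub_below_digit[of d "y ! j" "Suc n" "2 ^ n"] e(2) True assms(2,5) by simp
    then show ?thesis
      using True assms(3) ly unfolding a_def by simp
  next
    case False
    then show ?thesis
      using e(2) unfolding a_def by simp
  qed
  moreover have "deg b = deg y"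
    using deg_Sq_mon[OF assms(6)] deg_Sq_mon[OF borrow_mem_Sq_mon[of j y n]] assms(3-5) ly by simp
  ultimately show ?thesis
    using assms(1) t e(1) unfolding heavy_def a_def by auto
qed

lemma Sq_mon_term_negligible:
  assumes IH: "\<And>b. heavy k d b \<Longrightarrow> \<forall>q<Suc (Suc n). omega (Suc q) b = k - 2 \<Longrightarrow> {b} \<in> negligible k d"
    and y: "heavy k d y" "Suc n < d" "\<forall>q<Suc n. omega (Suc q) y = k - 2"
    and j: "j < k" "digit n (y ! j) = 0" and ones: "\<forall>l<k. digit (Suc n) (y ! l) = 1"
    and b: "b \<in> Sq_mon (2 ^ n) (y[j := y ! j - 2 ^ n])" "b \<noteq> y"
  shows "{b} \<in> negligible k d"
proof -
  define a where "a = y[j := y ! j - 2 ^ n]"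
  obtain t where t: "b = map2 (+) a t" "length t = length a" "sum_list t = 2 ^ n"
    "\<forall>i<length a. odd (a ! i choose t ! i)"
    using b(1) unfolding Sq_mon_def a_def by blast
  have ly: "length y = k" and la: "length a = k"
    using y(1) unfolding heavy_def a_def by simp_all
  have le: "2 ^ n \<le> y ! j"
    using digits_sub_pow2_borrow(1)[OF j(2)] ones j(1) by simp
  then have ya: "y = a[j := a ! j + 2 ^ n]"
    using ly j(1) unfolding a_def by simp
  have a_prefix: "\<forall>q<n. omega (Suc q) a = k - 2"
    using y(3) omega_Suc_update_sub_pow2[OF le] unfolding a_def by simp
  have heavy_b: "heavy k d b"
    using heavy_Sq_mon_term[OF y(1,2) j] ones j(1) b(1) by simp
  have "\<exists>i<k. t ! i \<noteq> 0"
    using t(2,3) la by (metis in_set_conv_nth sum_list_eq_0_iff power_not_zero zero_neq_numeral)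
  then obtain p i0 where p: "\<forall>i<k. 2 ^ p dvd t ! i" and i0: "i0 < k" "\<not> 2 ^ Suc p dvd t ! i0"
    using ex_pow2_valuation[of _ "{..<k}" "(!) t"] by blast
  show ?thesis
  proof (cases "p < n")
    case True
    then show ?thesis
      using minus_mons_if_valuation_below[OF la _ _ _ a_prefix _ p i0 True] t heavy_b la y(2)
      unfolding heavy_def
      by (simp add: negligible_singleton_if_minus_mons)
  next
    case False
    then have "\<forall>i<length a. 2 ^ n dvd t ! i"
      using p la by (meson dvd_trans le_imp_power_dvd not_less)
    then obtain i where i: "i < k" "i \<noteq> j" "b = y[j := y ! j - 2 ^ n, i := y ! i + 2 ^ n]"
      "digit n (y ! i) = 1"
      using concentrated_Sq_mon_term[OF ya _ t(1) b(2) t(2,3) _ t(4)] j(1) la by auto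
    have "\<forall>q<Suc (Suc n). omega (Suc q) b = k - 2"
      using carry_extends_full_prefix[OF ly j(1) i(1) i(2)[symmetric] j(2) i(4) ones y(3)] i(3) by simp
    with heavy_b show ?thesis
      by (rule IH)
  qed
qed

lemma carry_step:
  assumes IH: "\<And>b. heavy k d b \<Longrightarrow> \<forall>q<Suc (Suc n). omega (Suc q) b = k - 2 \<Longrightarrow> {b} \<in> negligible k d"
    and y: "heavy k d y" "Suc n < d" "\<forall>q<Suc n. omega (Suc q) y = k - 2"
    and j: "j < k" "digit n (y ! j) = 0" and ones: "\<forall>l<k. digit (Suc n) (y ! l) = 1"
  shows "{y} \<in> negligible k d"
proof -
  define S where "S = Sq_mon (2 ^ n) (y[j := y ! j - 2 ^ n])"
  have ly: "length y = k"
    using y(1) unfolding heavy_def by simp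
  have "y \<in> S"
    unfolding S_def using borrow_mem_Sq_mon[of j y n] j ones ly by simp
  then have "{y} = padd S (S - {y})"
    unfolding padd_def by blast
  moreover have "S \<in> negligible k d"
    unfolding S_def using y(2) ly
    by (intro negligible_if_hit Sq_mon_hit) (simp_all add: power_strict_increasing)
  moreover have "S - {y} \<in> negligible k d"
  proof (rule negligible_if_singletons)
    show "finite (S - {y})"
      unfolding S_def by (simp add: finite_Sq_mon)
    show "{b} \<in> negligible k d" if "b \<in> S - {y}" for b
      using that unfolding S_def by (intro Sq_mon_term_negligible[OF IH y j ones]) simp_all
  qed
  ultimately show ?thesis
    by (metis negligible_padd)
qed

section \<open>The induction on the initial run of weights\<close>

lemma carry_position:
  assumes "omega (Suc m) y < length y" "omega (Suc (Suc m)) y = length y"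
  obtains j where "j < length y" "digit m (y ! j) = 0" "\<forall>l<length y. digit (Suc m) (y ! l) = 1"
proof -
  obtain j where "j < length y" "digit m (y ! j) \<noteq> 1"
    using assms(1) omega_Suc_eq_length_iff[of m y] by auto
  moreover have "\<forall>l<length y. digit (Suc m) (y ! l) = 1"
    using assms(2) omega_Suc_eq_length_iff by blast
  ultimately show ?thesis
    using that digit_le_1[of m "y ! j"] by simp
qed

lemma ex_ge_pow2_if_omega_pos:
  assumes "d \<le> q" "0 < omega (Suc q) x"
  shows "\<exists>i<length x. 2 ^ d \<le> x ! i"
proof -
  obtain i where i: "i < length x" "digit q (x ! i) \<noteq> 0"
    using assms(2) by (metis omega_Suc_eq_sum_digit sum.neutral lessThan_iff less_irrefl)
  then have "2 ^ q \<le> x ! i"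
    unfolding digit_def by (metis div_less mod_0 not_less)
  moreover have "(2::nat) ^ d \<le> 2 ^ q"
    using assms(1) by simp
  ultimately show ?thesis
    using i(1) order.trans by blast
qed

lemma negligible_if_heavy:
  assumes "4 \<le> k" "heavy k d y" "omega 1 y < k" "\<forall>q<n. omega (Suc q) y = k - 2"
  shows "{y} \<in> negligible k d"
  using assms(2-)
proof (induction "d - n" arbitrary: n y rule: less_induct)
  case less
  have ly: "length y = k" and deg: "deg y = (k - 2) * (2 ^ d - 1)"
    using less.prems(1) unfolding heavy_def by simp_all
  have "n < d"
    using less.prems(1,3) entries_less_pow2_if_full_prefix[OF deg] not_less
    unfolding heavy_def by (metis less_le_trans)
  have IH: "{b} \<in> negligible k d"
    if "heavy k d b" "\<forall>q<Suc n. omega (Suc q) b = k - 2" for b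
    using less.hyps[of "Suc n" b] that \<open>n < d\<close> assms(1) by simp
  consider "omega (Suc n) y < k - 2" | "omega (Suc n) y = k - 2" | "k - 2 < omega (Suc n) y"
    by linarith
  then show ?case
  proof cases
    case 1
    then show ?thesis
      using minus_monsI[OF ly deg \<open>n < d\<close> less.prems(3)] negligible_singleton_if_minus_mons by blast
  next
    case 2
    then show ?thesis
      using IH[OF less.prems(1)] less.prems(3) less_Suc_eq by auto
  next
    case 3
    have "even (omega (Suc n) y + k)"
      using omega_parity[OF deg \<open>n < d\<close> less.prems(3)] assms(1) by simp
    with 3 omega_Suc_le_length[of n y] have full: "omega (Suc n) y = k"
      using ly by presburger
    then obtain m where m: "n = Suc m"
      using less.prems(2) by (cases n) auto
    moreover have "omega (Suc m) y < length y"
      using less.prems(3) m ly assms(1) by simp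
    ultimately obtain j where j: "j < k" "digit m (y ! j) = 0"
      and ones: "\<forall>l<k. digit (Suc m) (y ! l) = 1"
      using carry_position full ly by metis
    have "Suc m < d" "\<forall>q<Suc m. omega (Suc q) y = k - 2"
      using \<open>n < d\<close> less.prems(3) m by simp_all
    from carry_step[OF _ less.prems(1) this j ones] show ?thesis
      using IH m by simp
  qed
qed

theorem lemma3:
  fixes k d :: nat and x :: monom
  assumes "k \<ge> 4" and "d \<ge> 1"
    and "length x = k" and "deg x = (k - 2) * (2 ^ d - 1)"
    and "omega 1 x < k"
    and "\<exists>r>d. omega r x > 0"
  shows "\<exists>p q. p \<in> Pminus k d \<and> q \<in> hit k d \<and> {x} = padd p q"
proof -
  obtain q where "d \<le> q" "0 < omega (Suc q) x"
    using assms(6) by (metis Suc_pred less_Suc_eq_le not_gr_zero not_less_zero)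
  then have "heavy k d x"
    unfolding heavy_def using ex_ge_pow2_if_omega_pos assms(3,4) by blast
  then have "{x} \<in> negligible k d"
    using negligible_if_heavy[OF assms(1) _ assms(5), where n = 0] by simp
  then show ?thesis
    unfolding negligible_def by blast
qed

end
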